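(* Let $X$ be a feasible solution of the General-Cost Convex Program and let $\alpha_j$ be the first arrival times produced by Continuous-Time Poisson Rounding from $X$. For any box $i\in[n]$, any time $\tau\ge 0$, and any thresholds $\theta_j\ge 0$ for $j\ne i$, $$\mathbf{E}\Big[\sum_{j\ne i:\,\alpha_j<\tau}c_j\ \Big|\ \forall j\ne i,\ \alpha_j>\theta_j\Big]\le\tau.$$
   Context: Boxes $[n]$ with costs $c_i>0$. Write $x_+=\max\{x,0\}$. A feasible solution of the General-Cost Convex Program is a family of non-decreasing functions $X_i:[0,\infty)\to[0,1]$, $i\in[n]$, with $\sum_{i\in[n]}\big(X_i(t)-X_i((t-c_i)_+)\big)\le 1$ for all $t\ge 0$. Continuous-Time Poisson Rounding: let $\bar x_i(t)=\frac1t\int_0^t\big(X_i(t')-X_i((t'-c_i)_+)\big)\,dt'$. Independently for each box $i$, arrivals of box $i$ form a non-homogeneous Poisson process in time $\tau\ge 0$ with rate $\frac1{c_i}\bar x_i(\tau/2)$; $\alpha_i$ is the first arrival time of box $i$ ($\infty$ if none). *)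

theory Defs
  imports "HOL-Probability.Probability"
begin

definition feasible_GC :: "nat \<Rightarrow> (nat \<Rightarrow> real) \<Rightarrow> (nat \<Rightarrow> real \<Rightarrow> real) \<Rightarrow> bool" where
  "feasible_GC n c X \<longleftrightarrow>
     (\<forall>i<n. mono_on {0..} (X i) \<and> (\<forall>t\<ge>0. 0 \<le> X i t \<and> X i t \<le> 1)) \<and>
     (\<forall>t\<ge>0. (\<Sum>i<n. X i t - X i (max (t - c i) 0)) \<le> 1)"

definition xbar :: "(nat \<Rightarrow> real) \<Rightarrow> (nat \<Rightarrow> real \<Rightarrow> real) \<Rightarrow> nat \<Rightarrow> real \<Rightarrow> real" where
  "xbar c X i t = (1 / t) * (LBINT s:{0..t}. X i s - X i (max (s - c i) 0))"

definition poisson_rate :: "(nat \<Rightarrow> real) \<Rightarrow> (nat \<Rightarrow> real \<Rightarrow> real) \<Rightarrow> nat \<Rightarrow> real \<Rightarrow> real" where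
  "poisson_rate c X i tau = (1 / c i) * xbar c X i (tau / 2)"

definition cum_rate :: "(nat \<Rightarrow> real) \<Rightarrow> (nat \<Rightarrow> real \<Rightarrow> real) \<Rightarrow> nat \<Rightarrow> real \<Rightarrow> real" where
  "cum_rate c X i t = (LBINT s:{0..t}. poisson_rate c X i s)"

text \<open>First arrival times of Continuous-Time Poisson Rounding: independent, values in [0,\<infinity>],
  and the first arrival of an NHPP with rate lambda satisfies P(alpha > t) = exp(-\<integral>_0^t lambda).\<close>
definition poisson_rounding_first_arrivals ::
  "'a measure \<Rightarrow> nat \<Rightarrow> (nat \<Rightarrow> real) \<Rightarrow> (nat \<Rightarrow> real \<Rightarrow> real) \<Rightarrow> (nat \<Rightarrow> 'a \<Rightarrow> ennreal) \<Rightarrow> bool" where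
  "poisson_rounding_first_arrivals M n c X \<alpha> \<longleftrightarrow>
     prob_space.indep_vars M (\<lambda>_. borel) \<alpha> {..<n} \<and>
     (\<forall>j<n. \<forall>t\<ge>0. measure M {\<omega> \<in> space M. ennreal t < \<alpha> j \<omega>} = exp (- cum_rate c X j t))"

definition cond_exp_event :: "'a measure \<Rightarrow> ('a \<Rightarrow> real) \<Rightarrow> 'a set \<Rightarrow> real" where
  "cond_exp_event M Y B = (LINT \<omega>|M. indicator B \<omega> * Y \<omega>) / measure M B"

end

theory Submission
  imports Defs
begin

text \<open>Write \<open>\<Lambda>\<^sub>j\<close> for the cumulative rate of box \<open>j\<close>, so that \<open>P(\<alpha>\<^sub>j > t) = exp (-\<Lambda>\<^sub>j t)\<close>.
  By independence, conditioning on the event that all boxes \<open>k \<noteq> i\<close> survive their thresholds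
  only affects box \<open>j\<close> through its own threshold, and
  \<open>P(\<theta>\<^sub>j < \<alpha>\<^sub>j < \<tau>) / P(\<alpha>\<^sub>j > \<theta>\<^sub>j) \<le> 1 - exp (-(\<Lambda>\<^sub>j \<tau> - \<Lambda>\<^sub>j \<theta>\<^sub>j)) \<le> \<Lambda>\<^sub>j \<tau>\<close>.
  So the conditional expectation is at most \<open>\<Sum>\<^sub>j c\<^sub>j \<Lambda>\<^sub>j \<tau> = \<integral>\<^sub>0\<^sup>\<tau> \<Sum>\<^sub>j xbar\<^sub>j (s/2) ds\<close>, and
  feasibility makes \<open>\<Sum>\<^sub>j xbar\<^sub>j \<le> 1\<close> pointwise, as \<open>xbar\<^sub>j\<close> averages the increments of \<open>X\<^sub>j\<close>
  over windows of length \<open>c\<^sub>j\<close>.\<close>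

lemma sum_set_integral_le_measure:
  fixes f :: "'i \<Rightarrow> real \<Rightarrow> real" and S :: "real set"
  assumes J: "finite J" and S: "S \<in> sets lborel" "emeasure lborel S < \<infinity>"
    and nonneg: "\<And>j s. j \<in> J \<Longrightarrow> s \<in> S \<Longrightarrow> 0 \<le> f j s"
    and sum_le_1: "\<And>s. s \<in> S \<Longrightarrow> (\<Sum>j\<in>J. f j s) \<le> 1"
  shows "(\<Sum>j\<in>J. LBINT s:S. f j s) \<le> measure lborel S"
proof -
  \<comment> \<open>Non-integrable summands have integral \<open>0\<close>, so only the integrable ones matter.\<close>
  define J' where "J' = {j\<in>J. set_integrable lborel S (f j)}"
  have "(\<Sum>j\<in>J. LBINT s:S. f j s) = (\<Sum>j\<in>J'. LBINT s:S. f j s)"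
    unfolding J'_def
    by (rule sum.mono_neutral_right[OF J])
      (auto simp: set_lebesgue_integral_def set_integrable_def not_integrable_integral_eq)
  also have "\<dots> = (LINT s|lborel. (\<Sum>j\<in>J'. indicator S s * f j s))"
    unfolding set_lebesgue_integral_def real_scaleR_def
    by (subst Bochner_Integration.integral_sum) (auto simp: J'_def set_integrable_def)
  also have "\<dots> \<le> (LINT s|lborel. indicator S s)"
  proof (rule integral_mono)
    show "integrable lborel (\<lambda>s. \<Sum>j\<in>J'. indicator S s * f j s)"
      by (rule Bochner_Integration.integrable_sum) (auto simp: J'_def set_integrable_def)
    show "integrable lborel (indicat_real S)" using S by simp
    fix s show "(\<Sum>j\<in>J'. indicator S s * f j s) \<le> indicat_real S s"
    proof (cases "s \<in> S")
      case True
      have "(\<Sum>j\<in>J'. f j s) \<le> (\<Sum>j\<in>J. f j s)"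
        by (rule sum_mono2[OF J]) (auto simp: J'_def nonneg True)
      then show ?thesis using sum_le_1[OF True] True by simp
    qed simp
  qed
  also have "\<dots> = measure lborel S" using S by simp
  finally show ?thesis .
qed

lemma exp_minus_diff_le:
  fixes x y :: real
  assumes "0 \<le> x"
  shows "exp (- x) - exp (- y) \<le> y * exp (- x)"
proof -
  have "exp (- x) * (1 + (x - y)) \<le> exp (- x) * exp (x - y)"
    using exp_ge_add_one_self[of "x - y"] by (intro mult_left_mono) auto
  also have "\<dots> = exp (- y)" by (simp flip: exp_add)
  finally show ?thesis using mult_nonneg_nonneg[OF assms, of "exp (- x)"] by (simp add: algebra_simps)
qed

lemma (in prob_space) prob_between_le_cum_rate_mult_survival:
  fixes a :: "'a \<Rightarrow> ennreal" and L :: "real \<Rightarrow> real"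
  assumes a: "a \<in> borel_measurable M"
    and survival: "\<And>t. t \<ge> 0 \<Longrightarrow> prob {\<omega>\<in>space M. ennreal t < a \<omega>} = exp (- L t)"
    and "0 \<le> \<theta>" "0 \<le> \<tau>"
  shows "prob {\<omega>\<in>space M. ennreal \<theta> < a \<omega> \<and> a \<omega> < ennreal \<tau>}
           \<le> L \<tau> * prob {\<omega>\<in>space M. ennreal \<theta> < a \<omega>}"
proof -
  have L_nonneg: "0 \<le> L t" if "t \<ge> 0" for t
    using survival[OF that] prob_le_1[of "{\<omega>\<in>space M. ennreal t < a \<omega>}"] by simp
  show ?thesis
  proof (cases "\<tau> \<le> \<theta>")
    case True
    then have empty: "{\<omega>\<in>space M. ennreal \<theta> < a \<omega> \<and> a \<omega> < ennreal \<tau>} = {}"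
      by (auto dest: ennreal_leI order.strict_trans order.strict_trans2)
    show ?thesis unfolding empty using L_nonneg[OF \<open>0 \<le> \<tau>\<close>] by simp
  next
    case False
    let ?A = "{\<omega>\<in>space M. ennreal \<theta> < a \<omega>}"
    let ?B = "{\<omega>\<in>space M. ennreal \<tau> \<le> a \<omega>}"
    have events: "?A \<in> events" "?B \<in> events" "{\<omega>\<in>space M. ennreal \<tau> < a \<omega>} \<in> events"
      using a by measurable
    have "ennreal \<theta> < ennreal \<tau>" using False \<open>0 \<le> \<theta>\<close> by (simp add: ennreal_lessI)
    then have "?B \<subseteq> ?A" by (auto intro: order.strict_trans2)
    moreover have "prob {\<omega>\<in>space M. ennreal \<tau> < a \<omega>} \<le> prob ?B"
      by (rule finite_measure_mono) (use events(2) in auto)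
    ultimately have "prob (?A - ?B) \<le> exp (- L \<theta>) - exp (- L \<tau>)"
      using finite_measure_Diff[OF events(1,2)] survival[OF \<open>0 \<le> \<theta>\<close>] survival[OF \<open>0 \<le> \<tau>\<close>]
      by simp
    also have "\<dots> \<le> L \<tau> * exp (- L \<theta>)"
      using L_nonneg[OF \<open>0 \<le> \<theta>\<close>] by (rule exp_minus_diff_le)
    also have "?A - ?B = {\<omega>\<in>space M. ennreal \<theta> < a \<omega> \<and> a \<omega> < ennreal \<tau>}"
      by (auto simp: not_le)
    finally show ?thesis using survival[OF \<open>0 \<le> \<theta>\<close>] by simp
  qed
qed

lemma (in prob_space) indep_vars_prob_all_in:
  assumes "indep_vars M' X I" "finite J" "J \<subseteq> I" "\<And>k. k \<in> J \<Longrightarrow> S k \<in> sets (M' k)"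
  shows "prob {\<omega>\<in>space M. \<forall>k\<in>J. X k \<omega> \<in> S k} = (\<Prod>k\<in>J. prob {\<omega>\<in>space M. X k \<omega> \<in> S k})"
proof (cases "J = {}")
  case False
  have "{\<omega>\<in>space M. \<forall>k\<in>J. X k \<omega> \<in> S k} = (\<Inter>k\<in>J. X k -` S k \<inter> space M)"
    using False by auto
  moreover have "X k -` S k \<inter> space M = {\<omega>\<in>space M. X k \<omega> \<in> S k}" for k
    by auto
  ultimately show ?thesis
    using indep_varsD[OF assms(1) False assms(2,3,4)] by simp
qed (simp add: prob_space)

lemma (in prob_space) prob_survivals_and_arrival_le:
  fixes \<alpha> :: "'i \<Rightarrow> 'a \<Rightarrow> ennreal" and L :: "real \<Rightarrow> real"
  assumes indep: "indep_vars (\<lambda>_. borel) \<alpha> I" and J: "finite J" "J \<subseteq> I" "j \<in> J"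
    and survival: "\<And>t. t \<ge> 0 \<Longrightarrow> prob {\<omega>\<in>space M. ennreal t < \<alpha> j \<omega>} = exp (- L t)"
    and "0 \<le> \<theta> j" "0 \<le> \<tau>"
  defines "B \<equiv> {\<omega>\<in>space M. \<forall>k\<in>J. ennreal (\<theta> k) < \<alpha> k \<omega>}"
  shows "prob {\<omega>\<in>B. \<alpha> j \<omega> < ennreal \<tau>} \<le> L \<tau> * prob B"
proof -
  define S where "S k = {ennreal (\<theta> k)<..}" for k
  define S' where "S' = S(j := {ennreal (\<theta> j)<..<ennreal \<tau>})"
  let ?P = "\<lambda>T k. prob {\<omega>\<in>space M. \<alpha> k \<omega> \<in> T k}"
  have "prob {\<omega>\<in>space M. \<forall>k\<in>J. \<alpha> k \<omega> \<in> S k} = (\<Prod>k\<in>J. ?P S k)"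
    by (rule indep_vars_prob_all_in[OF indep J(1,2)]) (simp add: S_def)
  then have prob_B: "prob B = (\<Prod>k\<in>J. ?P S k)"
    by (simp add: B_def S_def)
  have "{\<omega>\<in>B. \<alpha> j \<omega> < ennreal \<tau>} = {\<omega>\<in>space M. \<forall>k\<in>J. \<alpha> k \<omega> \<in> S' k}"
    using \<open>j \<in> J\<close> by (auto simp: B_def S_def S'_def)
  then have "prob {\<omega>\<in>B. \<alpha> j \<omega> < ennreal \<tau>} = (\<Prod>k\<in>J. ?P S' k)"
    using indep_vars_prob_all_in[OF indep J(1,2), of S'] by (simp add: S'_def S_def)
  also have "\<dots> = ?P S' j * (\<Prod>k\<in>J-{j}. ?P S k)"
    using J by (simp add: prod.remove S'_def)
  also have "\<dots> \<le> (L \<tau> * ?P S j) * (\<Prod>k\<in>J-{j}. ?P S k)"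
  proof (rule mult_right_mono)
    have "\<alpha> j \<in> borel_measurable M"
      using indep J unfolding indep_vars_def by auto
    from prob_between_le_cum_rate_mult_survival[OF this survival \<open>0 \<le> \<theta> j\<close> \<open>0 \<le> \<tau>\<close>]
    show "?P S' j \<le> L \<tau> * ?P S j" by (simp add: S'_def S_def)
  qed (simp add: prod_nonneg)
  also have "\<dots> = L \<tau> * prob B"
    using J by (simp add: prob_B prod.remove mult.assoc)
  finally show ?thesis .
qed

lemma (in finite_measure) integral_indicator_mult_sum_filter:
  fixes c :: "'i \<Rightarrow> real"
  assumes "finite J" "B \<in> sets M" "\<And>j. j \<in> J \<Longrightarrow> {\<omega>\<in>space M. P j \<omega>} \<in> sets M"
  shows "(LINT \<omega>|M. indicator B \<omega> * (\<Sum>j\<in>{j\<in>J. P j \<omega>}. c j))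
           = (\<Sum>j\<in>J. c j * measure M {\<omega>\<in>B. P j \<omega>})"
proof -
  have events: "{\<omega>\<in>B. P j \<omega>} \<in> sets M" if "j \<in> J" for j
  proof -
    have "{\<omega>\<in>B. P j \<omega>} = B \<inter> {\<omega>\<in>space M. P j \<omega>}"
      using sets.sets_into_space[OF assms(2)] by blast
    then show ?thesis using assms(2,3) that by simp
  qed
  have "indicator B \<omega> * (\<Sum>j\<in>{j\<in>J. P j \<omega>}. c j)
          = (\<Sum>j\<in>J. c j * indicator {\<omega>\<in>B. P j \<omega>} \<omega>)" for \<omega>
    unfolding sum.inter_filter[OF assms(1)] sum_distrib_left
    by (intro sum.cong) (auto simp: indicator_def)
  then show ?thesis
    using events by (simp add: Bochner_Integration.integral_sum emeasure_finite less_top[symmetric]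
        Int_absorb2 sets.sets_into_space)
qed

lemma cond_exp_event_le:
  assumes "(LINT \<omega>|M. indicator B \<omega> * Y \<omega>) \<le> r * measure M B" "0 \<le> r"
  shows "cond_exp_event M Y B \<le> r"
proof (cases "measure M B = 0")
  case False
  then have "0 < measure M B" using measure_nonneg[of M B] by linarith
  then show ?thesis using assms(1) by (simp add: cond_exp_event_def divide_le_eq)
qed (simp add: cond_exp_event_def assms(2))

lemma feasible_GC_increment_nonneg:
  assumes "feasible_GC n c X" "j < n" "0 \<le> c j" "0 \<le> s"
  shows "0 \<le> X j s - X j (max (s - c j) 0)"
proof -
  have "mono_on {0..} (X j)" using assms(1,2) unfolding feasible_GC_def by blast
  then have "X j (max (s - c j) 0) \<le> X j s"
    by (rule mono_onD) (use assms(3,4) in auto)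
  then show ?thesis by simp
qed

lemma xbar_nonneg:
  assumes "feasible_GC n c X" "j < n" "0 \<le> c j" "0 \<le> t"
  shows "0 \<le> xbar c X j t"
proof -
  have "0 \<le> (LBINT s:{0..t}. X j s - X j (max (s - c j) 0))"
    using feasible_GC_increment_nonneg[OF assms(1-3)]
    by (auto simp: set_lebesgue_integral_def indicator_def intro!: Bochner_Integration.integral_nonneg)
  then show ?thesis unfolding xbar_def using assms(4) by simp
qed

lemma sum_xbar_le_1:
  assumes feasible: "feasible_GC n c X" and "\<forall>j<n. 0 \<le> c j" "0 \<le> t"
  shows "(\<Sum>j<n. xbar c X j t) \<le> 1"
proof (cases "t = 0")
  case True
  \<comment> \<open>Every \<open>xbar\<close> vanishes at \<open>0\<close>, as \<open>1 / 0 = 0\<close>.\<close>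
  then show ?thesis by (simp add: xbar_def)
next
  case False
  then have "0 < t" using assms by simp
  have "(\<Sum>j<n. LBINT s:{0..t}. X j s - X j (max (s - c j) 0)) \<le> measure lborel {0..t}"
  proof (rule sum_set_integral_le_measure)
    show "0 \<le> X j s - X j (max (s - c j) 0)" if "j \<in> {..<n}" "s \<in> {0..t}" for j s
      using that assms by (intro feasible_GC_increment_nonneg[OF feasible]) auto
    show "(\<Sum>j<n. X j s - X j (max (s - c j) 0)) \<le> 1" if "s \<in> {0..t}" for s
      using feasible that unfolding feasible_GC_def by simp
  qed (use \<open>0 < t\<close> in auto)
  then show ?thesis
    using \<open>0 < t\<close> by (simp add: xbar_def divide_le_eq flip: sum_divide_distrib)
qed

lemma sum_cost_cum_rate_le:
  assumes feasible: "feasible_GC n c X" and c: "\<forall>j<n. 0 < c j" and "0 \<le> \<tau>" "J \<subseteq> {..<n}"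
  shows "(\<Sum>j\<in>J. c j * cum_rate c X j \<tau>) \<le> \<tau>"
proof -
  have J: "finite J" using assms(4) finite_subset by blast
  have "(\<Sum>j\<in>J. c j * cum_rate c X j \<tau>) = (\<Sum>j\<in>J. LBINT s:{0..\<tau>}. xbar c X j (s/2))"
    using c assms(4) by (intro sum.cong) (auto simp: cum_rate_def poisson_rate_def)
  also have "\<dots> \<le> measure lborel {0..\<tau>}"
  proof (rule sum_set_integral_le_measure[OF J])
    show "0 \<le> xbar c X j (s/2)" if "j \<in> J" "s \<in> {0..\<tau>}" for j s
      using that c assms(4) by (intro xbar_nonneg[OF feasible]) auto
    show "(\<Sum>j\<in>J. xbar c X j (s/2)) \<le> 1" if "s \<in> {0..\<tau>}" for s
    proof -
      have "(\<Sum>j\<in>J. xbar c X j (s/2)) \<le> (\<Sum>j<n. xbar c X j (s/2))"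
        using that c assms(4) by (intro sum_mono2) (auto intro!: xbar_nonneg[OF feasible])
      also have "\<dots> \<le> 1"
        using that c by (intro sum_xbar_le_1[OF feasible]) auto
      finally show ?thesis .
    qed
  qed (use \<open>0 \<le> \<tau>\<close> in auto)
  also have "\<dots> = \<tau>" using \<open>0 \<le> \<tau>\<close> by simp
  finally show ?thesis .
qed

theorem lemma4p4:
  fixes M :: "'a measure" and n :: nat and c :: "nat \<Rightarrow> real"
    and X :: "nat \<Rightarrow> real \<Rightarrow> real" and \<alpha> :: "nat \<Rightarrow> 'a \<Rightarrow> ennreal"
    and i :: nat and \<tau> :: real and \<theta> :: "nat \<Rightarrow> real"
  assumes "prob_space M"
    and "\<forall>j<n. c j > 0"
    and "feasible_GC n c X"
    and "poisson_rounding_first_arrivals M n c X \<alpha>"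
    and "i < n" and "\<tau> \<ge> 0"
    and "\<forall>j\<in>{..<n} - {i}. \<theta> j \<ge> 0"
  shows "cond_exp_event M
           (\<lambda>\<omega>. \<Sum>j\<in>{j\<in>{..<n} - {i}. \<alpha> j \<omega> < ennreal \<tau>}. c j)
           {\<omega> \<in> space M. \<forall>j\<in>{..<n} - {i}. \<alpha> j \<omega> > ennreal (\<theta> j)}
         \<le> \<tau>"
proof -
  interpret prob_space M by fact
  define J where "J = {..<n} - {i}"
  define B where "B = {\<omega> \<in> space M. \<forall>j\<in>J. ennreal (\<theta> j) < \<alpha> j \<omega>}"
  have J: "finite J" "J \<subseteq> {..<n}" unfolding J_def by auto
  have indep: "indep_vars (\<lambda>_. borel) \<alpha> {..<n}"
    and survival: "\<And>j t. j < n \<Longrightarrow> t \<ge> 0 \<Longrightarrow>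
        prob {\<omega> \<in> space M. ennreal t < \<alpha> j \<omega>} = exp (- cum_rate c X j t)"
    using assms(4) unfolding poisson_rounding_first_arrivals_def by auto
  then have \<alpha>_measurable: "\<alpha> j \<in> borel_measurable M" if "j \<in> J" for j
    using J(2) that unfolding indep_vars_def by auto
  have "B \<in> events" unfolding B_def using J(1) \<alpha>_measurable by measurable
  moreover have "{\<omega>\<in>space M. \<alpha> j \<omega> < ennreal \<tau>} \<in> events" if "j \<in> J" for j
    using \<alpha>_measurable[OF that] by measurable
  ultimately have "(LINT \<omega>|M. indicator B \<omega> * (\<Sum>j\<in>{j\<in>J. \<alpha> j \<omega> < ennreal \<tau>}. c j))
      = (\<Sum>j\<in>J. c j * prob {\<omega>\<in>B. \<alpha> j \<omega> < ennreal \<tau>})"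
    by (rule integral_indicator_mult_sum_filter[OF J(1)])
  also have "\<dots> \<le> (\<Sum>j\<in>J. c j * (cum_rate c X j \<tau> * prob B))"
    using J assms(2,6,7) unfolding B_def J_def
    by (intro sum_mono mult_left_mono prob_survivals_and_arrival_le[OF indep] survival) auto
  also have "\<dots> = (\<Sum>j\<in>J. c j * cum_rate c X j \<tau>) * prob B"
    by (simp add: sum_distrib_right mult.assoc)
  also have "\<dots> \<le> \<tau> * prob B"
    using sum_cost_cum_rate_le[OF assms(3,2,6) J(2)] by (simp add: mult_right_mono)
  finally show ?thesis
    using assms(6) unfolding B_def J_def by (intro cond_exp_event_le)
qed

end
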